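(* Let $A\subset E$ be nonempty with finitely many minimal elements. Then the problem $$\min_L \xi(L)\quad\text{s.t. } L\text{ is a lower contour set in } A$$ admits a solution and has a largest minimizer, i.e. a minimizer $L^\star$ such that every minimizer $L$ satisfies $L\subset L^\star$.
   Context: $E$ is a finite or countably infinite set with a preorder $\precsim$ (reflexive and transitive) such that for every sequence $e_1\succsim e_2\succsim\cdots$ in $E$ there is $N\ge1$ with $e_N\precsim e_n$ for all $n\ge N$. Write $e\sim e'$ if $e\precsim e'$ and $e'\precsim e$. The minimal elements of $A$ are $\min(A,\precsim)=\{e\in A:\forall e'\in A,\ e'\precsim e\Rightarrow e'\sim e\}$. $\pi_0\in(0,1)$; $F_G,F_B$ are probability distributions on $E$ such that every $e\in E$ has $F_G(e)>0$ or $F_B(e)>0$. For nonempty $B\subset E$, $\nu(B)=\frac{F_G(B)\pi_0}{F_G(B)\pi_0+F_B(B)(1-\pi_0)}$ and $\xi(B)=\phi(\nu(B))$, where $\phi:[0,1]\to\mathbb{R}$ is strictly increasing. For nonempty $A\subset E$, a nonempty $L\subset A$ is a lower contour set in $A$ if for all $e\in L$ and $e'\in A$, $e'\precsim e$ implies $e'\in L$. *)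

theory Defs
  imports "HOL-Probability.Probability"
begin

definition min_elems :: "('e \<Rightarrow> 'e \<Rightarrow> bool) \<Rightarrow> 'e set \<Rightarrow> 'e set" where
  "min_elems le A = {e \<in> A. \<forall>e'\<in>A. le e' e \<longrightarrow> (le e' e \<and> le e e')}"

definition lower_contour :: "('e \<Rightarrow> 'e \<Rightarrow> bool) \<Rightarrow> 'e set \<Rightarrow> 'e set \<Rightarrow> bool" where
  "lower_contour le A L \<longleftrightarrow> L \<noteq> {} \<and> L \<subseteq> A \<and> (\<forall>e\<in>L. \<forall>e'\<in>A. le e' e \<longrightarrow> e' \<in> L)"

definition nu :: "real \<Rightarrow> 'e pmf \<Rightarrow> 'e pmf \<Rightarrow> 'e set \<Rightarrow> real" where
  "nu \<pi>0 FG FB B = measure_pmf.prob FG B * \<pi>0 /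
     (measure_pmf.prob FG B * \<pi>0 + measure_pmf.prob FB B * (1 - \<pi>0))"

definition xi :: "(real \<Rightarrow> real) \<Rightarrow> real \<Rightarrow> 'e pmf \<Rightarrow> 'e pmf \<Rightarrow> 'e set \<Rightarrow> real" where
  "xi \<phi> \<pi>0 FG FB B = \<phi> (nu \<pi>0 FG FB B)"

end

theory Submission
  imports Defs
begin

(* Let r be the infimum of nu over the lower contour sets in A. The set function
     mu B = pi0 (1 - r) F_G(B) - r (1 - pi0) F_B(B) = (pi0 F_G(B) + (1 - pi0) F_B(B)) (nu B - r)
   is a difference of finite measures; it is nonnegative on lower contour sets, has infimum 0 there,
   and vanishes exactly on the minimizers of nu. Lower contour sets are closed under unions and
   nonempty intersections, so modularity gives mu (L \<inter> M) <= mu L + mu M, and the null lower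
   contour sets are closed under finite unions. Every lower contour set contains one of the finitely
   many minimal elements, so a single minimal m lies in lower contour sets L_k with mu L_k < 2^-k;
   by continuity of mu, the lim inf of the L_k is a null lower contour set. As A is countable, the
   union of all null lower contour sets is a countable increasing union of null ones, hence null: it
   is the largest minimizer of nu, and of xi = phi o nu since phi is strictly increasing. *)

lemma lower_contour_INT:
  "I \<noteq> {} \<Longrightarrow> (\<And>i. i \<in> I \<Longrightarrow> lower_contour le A (L i)) \<Longrightarrow> x \<in> (\<Inter>i\<in>I. L i) \<Longrightarrow>
    lower_contour le A (\<Inter>i\<in>I. L i)"
  unfolding lower_contour_def by (intro conjI; blast)

lemma lower_contour_Union:
  "F \<noteq> {} \<Longrightarrow> (\<And>L. L \<in> F \<Longrightarrow> lower_contour le A L) \<Longrightarrow> lower_contour le A (\<Union>F)"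
  unfolding lower_contour_def by blast

lemma lower_contour_Int:
  "lower_contour le A L \<Longrightarrow> lower_contour le A M \<Longrightarrow> L \<inter> M \<noteq> {} \<Longrightarrow>
    lower_contour le A (L \<inter> M)"
  unfolding lower_contour_def by blast

lemma lower_contour_Un:
  "lower_contour le A L \<Longrightarrow> lower_contour le A M \<Longrightarrow> lower_contour le A (L \<union> M)"
  unfolding lower_contour_def by blast

lemma min_elems_below:
  assumes refl: "\<And>e. e \<in> E \<Longrightarrow> le e e"
    and trans: "\<And>a b c. a \<in> E \<Longrightarrow> b \<in> E \<Longrightarrow> c \<in> E \<Longrightarrow> le a b \<Longrightarrow> le b c \<Longrightarrow> le a c"
    and wqo: "\<And>s :: nat \<Rightarrow> 'e. (\<forall>n. s n \<in> E) \<Longrightarrow> (\<forall>n. le (s (Suc n)) (s n)) \<Longrightarrow>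
                 \<exists>N. \<forall>n\<ge>N. le (s N) (s n)"
    and "A \<subseteq> E" "x \<in> A"
  shows "\<exists>m\<in>min_elems le A. le m x"
proof (rule ccontr)
  define bad where "bad y \<longleftrightarrow> y \<in> A \<and> (\<forall>m\<in>min_elems le A. \<not> le m y)" for y
  assume "\<not> (\<exists>m\<in>min_elems le A. le m x)"
  then have "bad x" using \<open>x \<in> A\<close> by (simp add: bad_def)
  have "\<exists>y'. bad y' \<and> le y' y \<and> \<not> le y y'" if y: "bad y" for y
  proof -
    have "y \<notin> min_elems le A"
      using y refl \<open>A \<subseteq> E\<close> by (auto simp: bad_def)
    then obtain y' where y': "y' \<in> A" "le y' y" "\<not> le y y'"
      using y unfolding bad_def min_elems_def by blast
    have "bad y'"
      unfolding bad_def
    proof (intro conjI ballI notI)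
      fix m assume "m \<in> min_elems le A" "le m y'"
      moreover from this have "le m y"
        using trans[of m y' y] y y' \<open>A \<subseteq> E\<close> by (auto simp: bad_def min_elems_def)
      ultimately show False using y by (simp add: bad_def)
    qed fact
    with y' show ?thesis by blast
  qed
  then obtain f where f: "\<And>y. bad y \<Longrightarrow> bad (f y) \<and> le (f y) y \<and> \<not> le y (f y)"
    by metis
  define s where "s n = (f ^^ n) x" for n
  have bad_s: "bad (s n)" for n
    by (induction n) (simp_all add: s_def \<open>bad x\<close> f)
  have s_Suc: "s (Suc n) = f (s n)" for n
    by (simp add: s_def)
  have "\<forall>n. s n \<in> E"
    using bad_s \<open>A \<subseteq> E\<close> by (auto simp: bad_def)
  moreover have "\<forall>n. le (s (Suc n)) (s n)"
    unfolding s_Suc using f[OF bad_s] by blast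
  ultimately obtain N where "\<forall>n\<ge>N. le (s N) (s n)"
    using wqo[of s] by blast
  then have "le (s N) (s (Suc N))"
    by simp
  then show False
    unfolding s_Suc using f[OF bad_s] by blast
qed

lemma lower_contour_meets_min_elems:
  assumes "lower_contour le A L" "\<And>x. x \<in> A \<Longrightarrow> \<exists>m\<in>min_elems le A. le m x"
  shows "\<exists>m\<in>min_elems le A. m \<in> L"
proof -
  obtain x where "x \<in> L"
    using assms(1) unfolding lower_contour_def by blast
  moreover from this have "x \<in> A"
    using assms(1) unfolding lower_contour_def by blast
  then obtain m where "m \<in> min_elems le A" "le m x"
    using assms(2) by blast
  ultimately show ?thesis
    using assms(1) unfolding lower_contour_def min_elems_def by blast
qed

lemma INT_atLeast_eq_INT_atLeastAtMost:
  fixes n :: nat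
  shows "(\<Inter>k\<in>{n..}. L k) = (\<Inter>N. \<Inter>k\<in>{n..N}. L k)"
proof
  show "(\<Inter>k\<in>{n..}. L k) \<subseteq> (\<Inter>N. \<Inter>k\<in>{n..N}. L k)"
    by auto
  have "(\<Inter>N. \<Inter>k\<in>{n..N}. L k) \<subseteq> L k" if "n \<le> k" for k
  proof -
    have "(\<Inter>j\<in>{n..k}. L j) \<subseteq> L k"
      using that by (intro INT_lower) simp
    then show ?thesis
      by blast
  qed
  then show "(\<Inter>N. \<Inter>k\<in>{n..N}. L k) \<subseteq> (\<Inter>k\<in>{n..}. L k)"
    by auto
qed

lemma finite_bex_all_pos_swap:
  fixes P :: "'a \<Rightarrow> real \<Rightarrow> bool"
  assumes "finite M"
    and ex: "\<And>\<epsilon>. \<epsilon> > 0 \<Longrightarrow> \<exists>m\<in>M. P m \<epsilon>"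
    and mono: "\<And>m \<epsilon> \<epsilon>'. P m \<epsilon> \<Longrightarrow> \<epsilon> \<le> \<epsilon>' \<Longrightarrow> P m \<epsilon>'"
  shows "\<exists>m\<in>M. \<forall>\<epsilon>>0. P m \<epsilon>"
proof (rule ccontr)
  assume "\<not> ?thesis"
  then obtain \<delta> where \<delta>: "\<And>m. m \<in> M \<Longrightarrow> \<delta> m > 0 \<and> \<not> P m (\<delta> m)"
    by metis
  have "M \<noteq> {}" using ex[of 1] by auto
  then have "Min (\<delta> ` M) > 0"
    using \<open>finite M\<close> \<delta> by simp
  then obtain m where "m \<in> M" "P m (Min (\<delta> ` M))"
    using ex by blast
  then have "P m (\<delta> m)"
    using \<open>finite M\<close> by (auto intro: mono Min_le)
  with \<delta> \<open>m \<in> M\<close> show False by blast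
qed

locale continuous_modular =
  fixes \<mu> :: "'a set \<Rightarrow> real"
  assumes modular: "\<mu> (X \<union> Y) + \<mu> (X \<inter> Y) = \<mu> X + \<mu> Y"
    and empty [simp]: "\<mu> {} = 0"
    and continuous_from_below: "incseq S \<Longrightarrow> (\<lambda>n. \<mu> (S n)) \<longlonglongrightarrow> \<mu> (\<Union>n. S n)"
    and continuous_from_above: "decseq S \<Longrightarrow> (\<lambda>n. \<mu> (S n)) \<longlonglongrightarrow> \<mu> (\<Inter>n. S n)"

lemma continuous_modular_lincomb_pmf:
  "continuous_modular (\<lambda>X. a * measure_pmf.prob P X + b * measure_pmf.prob Q X)"
proof
  fix X Y :: "'a set"
  have prob_Un: "measure_pmf.prob R (X \<union> Y) =
      measure_pmf.prob R X + measure_pmf.prob R Y - measure_pmf.prob R (X \<inter> Y)" for R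
    by (auto intro!: measure_Un3 simp: fmeasurable_def measure_pmf.emeasure_finite less_top[symmetric])
  show "a * measure_pmf.prob P (X \<union> Y) + b * measure_pmf.prob Q (X \<union> Y) +
      (a * measure_pmf.prob P (X \<inter> Y) + b * measure_pmf.prob Q (X \<inter> Y)) =
      a * measure_pmf.prob P X + b * measure_pmf.prob Q X +
      (a * measure_pmf.prob P Y + b * measure_pmf.prob Q Y)"
    unfolding prob_Un by (simp add: algebra_simps)
qed (auto intro!: tendsto_intros measure_pmf.finite_Lim_measure_incseq
       measure_pmf.finite_Lim_measure_decseq)

context continuous_modular
begin

lemma lower_contour_INT_subadditive:
  fixes n N :: nat
  assumes nonneg: "\<And>L. lower_contour le A L \<Longrightarrow> 0 \<le> \<mu> L"
    and L: "\<And>k. lower_contour le A (L k)" "\<And>k. m \<in> L k"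
    and "n \<le> N"
  shows "\<mu> (\<Inter>k\<in>{n..N}. L k) \<le> (\<Sum>k=n..N. \<mu> (L k))"
  using \<open>n \<le> N\<close>
proof (induction N rule: dec_induct)
  case base
  then show ?case by simp
next
  case (step N)
  have "(\<Inter>k\<in>{n..Suc N}. L k) = (\<Inter>k\<in>{n..N}. L k) \<inter> L (Suc N)"
    using step.hyps by (auto simp: le_Suc_eq)
  moreover have "lower_contour le A (\<Inter>k\<in>{n..N}. L k)"
    using step.hyps L by (intro lower_contour_INT[where x = m]) auto
  then have "0 \<le> \<mu> ((\<Inter>k\<in>{n..N}. L k) \<union> L (Suc N))"
    using L by (intro nonneg lower_contour_Un)
  ultimately show ?case
    using modular[of "\<Inter>k\<in>{n..N}. L k" "L (Suc N)"] step.IH step.hyps by simp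
qed

lemma null_lower_contour_through:
  assumes nonneg: "\<And>L. lower_contour le A L \<Longrightarrow> 0 \<le> \<mu> L"
    and small: "\<And>\<epsilon>. \<epsilon> > 0 \<Longrightarrow> \<exists>L. lower_contour le A L \<and> m \<in> L \<and> \<mu> L < \<epsilon>"
  shows "\<exists>L. lower_contour le A L \<and> m \<in> L \<and> \<mu> L = 0"
proof -
  have "\<forall>k::nat. \<exists>L. lower_contour le A L \<and> m \<in> L \<and> \<mu> L < (1/2)^k"
    using small by simp
  then obtain L where L: "\<And>k. lower_contour le A (L k)" "\<And>k. m \<in> L k"
    and L_small: "\<And>k. \<mu> (L k) < (1/2)^k"
    by metis
  define K where "K n = (\<Inter>k\<in>{n..}. L k)" for n
  have K: "lower_contour le A (K n)" "m \<in> K n" for n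
    unfolding K_def using L by (auto intro!: lower_contour_INT[where x = m])
  have K_bound: "\<mu> (K n) \<le> 2 * (1/2)^n" for n
  proof -
    have "K n = (\<Inter>N. \<Inter>k\<in>{n..N}. L k)"
      unfolding K_def by (rule INT_atLeast_eq_INT_atLeastAtMost)
    moreover have "decseq (\<lambda>N. \<Inter>k\<in>{n..N}. L k)"
      by (auto simp: decseq_def)
    ultimately have "(\<lambda>N. \<mu> (\<Inter>k\<in>{n..N}. L k)) \<longlonglongrightarrow> \<mu> (K n)"
      by (simp add: continuous_from_above)
    moreover have "\<mu> (\<Inter>k\<in>{n..N}. L k) \<le> 2 * (1/2)^n" if "n \<le> N" for N
    proof -
      have "\<mu> (\<Inter>k\<in>{n..N}. L k) \<le> (\<Sum>k=n..N. \<mu> (L k))"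
        using nonneg L that by (rule lower_contour_INT_subadditive)
      also have "\<dots> \<le> (\<Sum>k=n..N. (1/2)^k)"
        using L_small by (intro sum_mono) (simp add: less_imp_le)
      also have "\<dots> \<le> 2 * (1/2)^n"
        using that by (simp add: sum_gp)
      finally show ?thesis .
    qed
    ultimately show ?thesis
      by (intro LIMSEQ_le_const2) auto
  qed
  have "incseq K"
    by (auto simp: incseq_def K_def)
  then have "(\<lambda>n. \<mu> (K n)) \<longlonglongrightarrow> \<mu> (\<Union>n. K n)"
    by (rule continuous_from_below)
  moreover have "(\<lambda>n. 2 * (1/2)^n :: real) \<longlonglongrightarrow> 0"
    by (intro tendsto_eq_intros LIMSEQ_power_zero) auto
  ultimately have "\<mu> (\<Union>n. K n) \<le> 0"
    using K_bound by (blast intro: LIMSEQ_le)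
  moreover have "lower_contour le A (\<Union>n. K n)"
    using K by (intro lower_contour_Union) auto
  moreover have "m \<in> (\<Union>n. K n)"
    using K by auto
  ultimately show ?thesis
    using nonneg by force
qed

lemma null_lower_contour_Un:
  assumes nonneg: "\<And>L. lower_contour le A L \<Longrightarrow> 0 \<le> \<mu> L"
    and "lower_contour le A L" "\<mu> L = 0" "lower_contour le A M" "\<mu> M = 0"
  shows "\<mu> (L \<union> M) = 0"
proof -
  have "0 \<le> \<mu> (L \<inter> M)"
    using assms by (cases "L \<inter> M = {}") (auto intro: nonneg lower_contour_Int)
  moreover have "0 \<le> \<mu> (L \<union> M)"
    using assms by (intro nonneg lower_contour_Un)
  ultimately show ?thesis
    using modular[of L M] assms by simp
qed

lemma null_lower_contour_UN:
  assumes nonneg: "\<And>L. lower_contour le A L \<Longrightarrow> 0 \<le> \<mu> L"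
    and C: "\<And>j::nat. lower_contour le A (C j)" "\<And>j. \<mu> (C j) = 0"
  shows "lower_contour le A (\<Union>j. C j)" "\<mu> (\<Union>j. C j) = 0"
proof -
  show "lower_contour le A (\<Union>j. C j)"
    using C by (intro lower_contour_Union) auto
  define N where "N n = (\<Union>j\<le>n. C j)" for n
  have N: "lower_contour le A (N n) \<and> \<mu> (N n) = 0" for n
  proof (induction n)
    case 0
    then show ?case using C by (simp add: N_def)
  next
    case (Suc n)
    have "N (Suc n) = N n \<union> C (Suc n)"
      by (auto simp: N_def le_Suc_eq)
    then show ?case
      using Suc.IH C nonneg null_lower_contour_Un lower_contour_Un by metis
  qed
  have "incseq N"
    unfolding incseq_def N_def by (intro allI impI UN_mono) auto
  then have "(\<lambda>n. \<mu> (N n)) \<longlonglongrightarrow> \<mu> (\<Union>n. N n)"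
    by (rule continuous_from_below)
  moreover have "(\<Union>n. N n) = (\<Union>j. C j)"
    by (auto simp: N_def)
  ultimately show "\<mu> (\<Union>j. C j) = 0"
    using N by (simp add: LIMSEQ_const_iff)
qed

lemma Union_null_lower_contours:
  fixes le :: "'a \<Rightarrow> 'a \<Rightarrow> bool" and A :: "'a set"
  defines "U \<equiv> \<Union>{L. lower_contour le A L \<and> \<mu> L = 0}"
  assumes nonneg: "\<And>L. lower_contour le A L \<Longrightarrow> 0 \<le> \<mu> L"
    and "countable A" "lower_contour le A L0" "\<mu> L0 = 0"
  shows "lower_contour le A U" "\<mu> U = 0"
proof -
  have "U \<noteq> {}" "U \<subseteq> A"
    using assms(3-) unfolding U_def lower_contour_def by blast+
  then have "countable U"
    using \<open>countable A\<close> countable_subset by blast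
  have "\<forall>e\<in>U. \<exists>L. lower_contour le A L \<and> \<mu> L = 0 \<and> e \<in> L"
    unfolding U_def by blast
  then obtain C where C: "\<And>e. e \<in> U \<Longrightarrow> lower_contour le A (C e)"
    "\<And>e. e \<in> U \<Longrightarrow> \<mu> (C e) = 0" "\<And>e. e \<in> U \<Longrightarrow> e \<in> C e"
    by metis
  define e where "e = from_nat_into U"
  have e: "e j \<in> U" for j
    unfolding e_def using \<open>U \<noteq> {}\<close> by (rule from_nat_into)
  have "U = (\<Union>j. C (e j))"
  proof
    show "(\<Union>j. C (e j)) \<subseteq> U"
      unfolding U_def using C e by blast
    have "range e = U"
      unfolding e_def using \<open>U \<noteq> {}\<close> \<open>countable U\<close> by (rule range_from_nat_into)
    then show "U \<subseteq> (\<Union>j. C (e j))"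
      using C(3) by blast
  qed
  then show "lower_contour le A U" "\<mu> U = 0"
    using null_lower_contour_UN[OF nonneg, where C = "\<lambda>j. C (e j)"] C e by simp_all
qed

lemma largest_null_lower_contour:
  assumes nonneg: "\<And>L. lower_contour le A L \<Longrightarrow> 0 \<le> \<mu> L"
    and inf_zero: "\<And>\<epsilon>. \<epsilon> > 0 \<Longrightarrow> \<exists>L. lower_contour le A L \<and> \<mu> L < \<epsilon>"
    and "countable A" "finite (min_elems le A)"
    and below: "\<And>x. x \<in> A \<Longrightarrow> \<exists>m\<in>min_elems le A. le m x"
  shows "\<exists>U. lower_contour le A U \<and> \<mu> U = 0 \<and>
           (\<forall>L. lower_contour le A L \<and> \<mu> L = 0 \<longrightarrow> L \<subseteq> U)"
proof -
  have "\<exists>m\<in>min_elems le A. \<forall>\<epsilon>>0. \<exists>L. lower_contour le A L \<and> m \<in> L \<and> \<mu> L < \<epsilon>"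
  proof (rule finite_bex_all_pos_swap[OF \<open>finite (min_elems le A)\<close>])
    fix \<epsilon> :: real assume "\<epsilon> > 0"
    then obtain L where "lower_contour le A L" "\<mu> L < \<epsilon>"
      using inf_zero by blast
    moreover from this obtain m where "m \<in> min_elems le A" "m \<in> L"
      using lower_contour_meets_min_elems below by blast
    ultimately show "\<exists>m\<in>min_elems le A. \<exists>L. lower_contour le A L \<and> m \<in> L \<and> \<mu> L < \<epsilon>"
      by blast
  next
    fix m \<epsilon> \<epsilon>'
    assume "\<exists>L. lower_contour le A L \<and> m \<in> L \<and> \<mu> L < \<epsilon>" "\<epsilon> \<le> \<epsilon>'"
    then show "\<exists>L. lower_contour le A L \<and> m \<in> L \<and> \<mu> L < \<epsilon>'"
      by (meson less_le_trans)
  qed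
  then obtain L0 where "lower_contour le A L0" "\<mu> L0 = 0"
    using null_lower_contour_through[OF nonneg] by blast
  with Union_null_lower_contours[OF nonneg \<open>countable A\<close>] show ?thesis
    by blast
qed

end

definition mixture_prob :: "real \<Rightarrow> 'e pmf \<Rightarrow> 'e pmf \<Rightarrow> 'e set \<Rightarrow> real" where
  "mixture_prob \<pi>0 FG FB B = measure_pmf.prob FG B * \<pi>0 + measure_pmf.prob FB B * (1 - \<pi>0)"

lemma nu_eq_mixture_prob:
  "nu \<pi>0 FG FB B = measure_pmf.prob FG B * \<pi>0 / mixture_prob \<pi>0 FG FB B"
  by (simp add: nu_def mixture_prob_def)

lemma mixture_prob_pos:
  assumes "0 < \<pi>0" "\<pi>0 < 1" "B \<noteq> {}" "\<And>e. e \<in> B \<Longrightarrow> pmf FG e > 0 \<or> pmf FB e > 0"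
  shows "0 < mixture_prob \<pi>0 FG FB B"
proof -
  obtain e where "e \<in> B" and e: "pmf FG e > 0 \<or> pmf FB e > 0"
    using assms(3,4) by blast
  then have "pmf FG e \<le> measure_pmf.prob FG B" "pmf FB e \<le> measure_pmf.prob FB B"
    by (auto simp: measure_pmf_single[symmetric] intro: measure_pmf.finite_measure_mono)
  then have "0 < measure_pmf.prob FG B * \<pi>0 \<or> 0 < measure_pmf.prob FB B * (1 - \<pi>0)"
    using e assms(1,2) by auto
  moreover have "0 \<le> measure_pmf.prob FG B * \<pi>0" "0 \<le> measure_pmf.prob FB B * (1 - \<pi>0)"
    using assms(1,2) by simp_all
  ultimately show ?thesis
    unfolding mixture_prob_def by linarith
qed

lemma mixture_prob_le_1:
  assumes "0 \<le> \<pi>0" "\<pi>0 \<le> 1"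
  shows "mixture_prob \<pi>0 FG FB B \<le> 1"
proof -
  have "measure_pmf.prob FG B * \<pi>0 \<le> \<pi>0" "measure_pmf.prob FB B * (1 - \<pi>0) \<le> 1 - \<pi>0"
    using assms by (simp_all add: mult_left_le_one_le)
  then show ?thesis
    unfolding mixture_prob_def by simp
qed

lemma nu_in_unit_interval:
  assumes "0 \<le> \<pi>0" "\<pi>0 \<le> 1"
  shows "nu \<pi>0 FG FB B \<in> {0..1}"
proof -
  have "0 \<le> measure_pmf.prob FG B * \<pi>0" "0 \<le> measure_pmf.prob FB B * (1 - \<pi>0)"
    using assms by simp_all
  then show ?thesis
    unfolding nu_def by (auto simp: divide_le_eq_1)
qed

lemma mixture_prob_mult_nu_diff:
  assumes "mixture_prob \<pi>0 FG FB B \<noteq> 0"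
  shows "\<pi>0 * (1 - r) * measure_pmf.prob FG B - r * (1 - \<pi>0) * measure_pmf.prob FB B =
    mixture_prob \<pi>0 FG FB B * (nu \<pi>0 FG FB B - r)"
proof -
  have "mixture_prob \<pi>0 FG FB B * (nu \<pi>0 FG FB B - r) =
      measure_pmf.prob FG B * \<pi>0 - r * mixture_prob \<pi>0 FG FB B"
    using assms unfolding nu_eq_mixture_prob by (simp add: field_simps)
  then show ?thesis
    by (simp add: mixture_prob_def algebra_simps)
qed

lemma lower_contour_largest_nu_minimizer:
  assumes "0 < \<pi>0" "\<pi>0 < 1" "A \<noteq> {}"
    and supp: "\<And>e. e \<in> A \<Longrightarrow> pmf FG e > 0 \<or> pmf FB e > 0"
    and "countable A" "finite (min_elems le A)"
    and below: "\<And>x. x \<in> A \<Longrightarrow> \<exists>m\<in>min_elems le A. le m x"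
  shows "\<exists>U. lower_contour le A U \<and> (\<forall>L. lower_contour le A L \<longrightarrow> nu \<pi>0 FG FB U \<le> nu \<pi>0 FG FB L) \<and>
           (\<forall>L. lower_contour le A L \<and> nu \<pi>0 FG FB L = nu \<pi>0 FG FB U \<longrightarrow> L \<subseteq> U)"
proof -
  let ?lc = "lower_contour le A" and ?\<nu> = "nu \<pi>0 FG FB" and ?mix = "mixture_prob \<pi>0 FG FB"
  have mix_pos: "0 < ?mix L" if "?lc L" for L
    using that supp \<open>0 < \<pi>0\<close> \<open>\<pi>0 < 1\<close> by (intro mixture_prob_pos) (auto simp: lower_contour_def)
  define r where "r = Inf (?\<nu> ` Collect ?lc)"
  have "?lc A"
    using \<open>A \<noteq> {}\<close> by (simp add: lower_contour_def)
  have r_le: "r \<le> ?\<nu> L" if "?lc L" for L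
    unfolding r_def using that nu_in_unit_interval[of \<pi>0] \<open>0 < \<pi>0\<close> \<open>\<pi>0 < 1\<close>
    by (intro cInf_lower bdd_belowI[of _ 0]) auto
  define \<mu> where "\<mu> X = \<pi>0 * (1 - r) * measure_pmf.prob FG X + (- r * (1 - \<pi>0)) * measure_pmf.prob FB X"
    for X
  interpret continuous_modular \<mu>
    unfolding \<mu>_def by (rule continuous_modular_lincomb_pmf)
  have \<mu>_eq: "\<mu> L = ?mix L * (?\<nu> L - r)" if "?lc L" for L
    unfolding \<mu>_def using mixture_prob_mult_nu_diff[of \<pi>0 FG FB L r] mix_pos[OF that] by simp
  have nonneg: "0 \<le> \<mu> L" if "?lc L" for L
    using \<mu>_eq[OF that] mix_pos[OF that] r_le[OF that] by simp
  have "\<exists>L. ?lc L \<and> \<mu> L < \<epsilon>" if "\<epsilon> > 0" for \<epsilon>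
  proof -
    obtain L where "?lc L" "?\<nu> L < r + \<epsilon>"
      using cInf_lessD[of "?\<nu> ` Collect ?lc" "r + \<epsilon>"] \<open>?lc A\<close> \<open>\<epsilon> > 0\<close> unfolding r_def by auto
    moreover from this have "?mix L * (?\<nu> L - r) \<le> ?\<nu> L - r"
      using mix_pos[of L] r_le[of L] mixture_prob_le_1[of \<pi>0 FG FB L] \<open>0 < \<pi>0\<close> \<open>\<pi>0 < 1\<close>
      by (intro mult_left_le_one_le) auto
    ultimately show ?thesis
      using \<mu>_eq by force
  qed
  then obtain U where U: "?lc U" "\<mu> U = 0" "\<And>L. ?lc L \<Longrightarrow> \<mu> L = 0 \<Longrightarrow> L \<subseteq> U"
    using largest_null_lower_contour[OF nonneg _ \<open>countable A\<close> \<open>finite (min_elems le A)\<close> below]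
    by blast
  have "?\<nu> U = r"
    using \<mu>_eq[OF U(1)] U(2) mix_pos[OF U(1)] by simp
  show ?thesis
  proof (intro exI conjI allI impI)
    show "?lc U" by fact
    show "?\<nu> U \<le> ?\<nu> L" if "?lc L" for L
      using r_le[OF that] \<open>?\<nu> U = r\<close> by simp
    show "L \<subseteq> U" if "?lc L \<and> ?\<nu> L = ?\<nu> U" for L
      using that U(3) \<mu>_eq \<open>?\<nu> U = r\<close> by simp
  qed
qed

theorem lemmaA6:
  fixes E :: "'e set" and le :: "'e \<Rightarrow> 'e \<Rightarrow> bool"
    and \<pi>0 :: real and FG FB :: "'e pmf" and \<phi> :: "real \<Rightarrow> real" and A :: "'e set"
  assumes E_countable: "countable E"
    and refl: "\<And>e. e \<in> E \<Longrightarrow> le e e"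
    and trans: "\<And>a b c. a \<in> E \<Longrightarrow> b \<in> E \<Longrightarrow> c \<in> E \<Longrightarrow> le a b \<Longrightarrow> le b c \<Longrightarrow> le a c"
    and wqo: "\<And>s :: nat \<Rightarrow> 'e. (\<forall>n. s n \<in> E) \<Longrightarrow> (\<forall>n. le (s (Suc n)) (s n)) \<Longrightarrow>
                 \<exists>N. \<forall>n\<ge>N. le (s N) (s n)"
    and pi0: "0 < \<pi>0" "\<pi>0 < 1"
    and FG_E: "set_pmf FG \<subseteq> E" and FB_E: "set_pmf FB \<subseteq> E"
    and supp: "\<And>e. e \<in> E \<Longrightarrow> pmf FG e > 0 \<or> pmf FB e > 0"
    and phi: "strict_mono_on {0..1} \<phi>"
    and A: "A \<subseteq> E" "A \<noteq> {}"
    and fin_min: "finite (min_elems le A)"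
  shows "\<exists>Ls. lower_contour le A Ls
           \<and> (\<forall>L. lower_contour le A L \<longrightarrow> xi \<phi> \<pi>0 FG FB Ls \<le> xi \<phi> \<pi>0 FG FB L)
           \<and> (\<forall>L. lower_contour le A L \<and> xi \<phi> \<pi>0 FG FB L = xi \<phi> \<pi>0 FG FB Ls \<longrightarrow> L \<subseteq> Ls)"
proof -
  have "\<exists>m\<in>min_elems le A. le m x" if "x \<in> A" for x
    using refl trans wqo A(1) that by (rule min_elems_below)
  moreover have "countable A"
    using A(1) E_countable by (rule countable_subset)
  ultimately obtain U where "lower_contour le A U"
    and U_min: "\<And>L. lower_contour le A L \<Longrightarrow> nu \<pi>0 FG FB U \<le> nu \<pi>0 FG FB L"
    and U_max: "\<And>L. lower_contour le A L \<Longrightarrow> nu \<pi>0 FG FB L = nu \<pi>0 FG FB U \<Longrightarrow> L \<subseteq> U"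
    using lower_contour_largest_nu_minimizer[OF pi0 A(2), of FG FB le] supp A(1) fin_min by blast
  have nu_01: "nu \<pi>0 FG FB L \<in> {0..1}" for L
    using pi0 by (intro nu_in_unit_interval) simp_all
  show ?thesis
  proof (intro exI conjI allI impI)
    show "lower_contour le A U" by fact
    show "xi \<phi> \<pi>0 FG FB U \<le> xi \<phi> \<pi>0 FG FB L" if "lower_contour le A L" for L
      unfolding xi_def using nu_01 U_min[OF that] by (intro strict_mono_on_leD[OF phi])
    show "L \<subseteq> U" if "lower_contour le A L \<and> xi \<phi> \<pi>0 FG FB L = xi \<phi> \<pi>0 FG FB U" for L
      using that strict_mono_on_eqD[OF phi _ nu_01 nu_01] U_max unfolding xi_def by metis
  qed
qed

end
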